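(* Let $I$ be an index set and $P_r,Q_r\in GL(n,\mathbb R)$ for $r\in I$. There exists a $C^1$-diffeomorphism (respectively, a real-analytic diffeomorphism with real-analytic inverse) $f\colon\mathbb R^n\to\mathbb R^n$ with $f(P_rx)=Q_rf(x)$ for all $x\in\mathbb R^n$, $r\in I$, if and only if there exists $C\in GL(n,\mathbb R)$ with $CP_r=Q_rC$ for all $r\in I$. *)

theory Defs
  imports "HOL-Analysis.Analysis"
begin

definition C1_map :: "(real^'n \<Rightarrow> real^'m) \<Rightarrow> bool" where
  "C1_map f \<longleftrightarrow> (\<exists>f' :: (real^'n) \<Rightarrow> ((real^'n) \<Rightarrow>\<^sub>L (real^'m)).
      (\<forall>x. (f has_derivative blinfun_apply (f' x)) (at x)) \<and> continuous_on UNIV f')"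

definition C1_diffeo :: "(real^'n \<Rightarrow> real^'n) \<Rightarrow> bool" where
  "C1_diffeo f \<longleftrightarrow> bij f \<and> C1_map f \<and> C1_map (inv f)"

definition monomial_at :: "real^'n \<Rightarrow> ('n \<Rightarrow> nat) \<Rightarrow> real^'n \<Rightarrow> real" where
  "monomial_at x0 al y = prod (\<lambda>i. (y$i - x0$i) ^ (al i)) UNIV"

definition real_analytic_at :: "(real^'n \<Rightarrow> real^'m) \<Rightarrow> real^'n \<Rightarrow> bool" where
  "real_analytic_at f x0 \<longleftrightarrow> (\<exists>r>0. \<exists>a :: ('n \<Rightarrow> nat) \<Rightarrow> real^'m.
      \<forall>y\<in>ball x0 r.
        ((\<lambda>al. norm (monomial_at x0 al y *\<^sub>R a al)) summable_on UNIV) \<and>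
        ((\<lambda>al. monomial_at x0 al y *\<^sub>R a al) has_sum f y) UNIV)"

definition real_analytic :: "(real^'n \<Rightarrow> real^'m) \<Rightarrow> bool" where
  "real_analytic f \<longleftrightarrow> (\<forall>x. real_analytic_at f x)"

definition analytic_diffeo :: "(real^'n \<Rightarrow> real^'n) \<Rightarrow> bool" where
  "analytic_diffeo f \<longleftrightarrow> bij f \<and> real_analytic f \<and> real_analytic (inv f)"

end

theory Submission imports Defs begin

(* Sufficiency is trivial in both regularities: if C P_r = Q_r C with C invertible,
   then f x = C x is a linear bijection whose inverse is again linear, and linear maps
   are both C^1 and real-analytic (their Taylor series at any point has finitely many
   terms).

   Necessity is linearisation at the common fixed point 0.  If f (P_r x) = Q_r (f x)
   and f is differentiable at 0 with derivative L, the chain rule gives L P_r = Q_r L;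
   if moreover inv f is differentiable at f 0, then L has a left inverse, so C = L
   works.  For real-analytic
   maps we show that a function given near x0 by an absolutely convergent power series
   is differentiable at x0: the terms of degree < 2 form the affine approximation and
   the remaining terms are bounded by a constant times |y - x0|^2, by comparison with
   the absolutely convergent series at a point on the diagonal through x0. *)

lemma C1_map_matrix: "C1_map (\<lambda>x::real^'n. (A::real^'n^'m) *v x)"
  unfolding C1_map_def
  by (rule exI[of _ "\<lambda>_. Blinfun (\<lambda>x. A *v x)"])
     (auto simp: bounded_linear_Blinfun_apply intro!: linear_imp_has_derivative)

lemma invertible_matrix_map_inverse:
  fixes C :: "real^'n^'n"
  assumes "invertible C"
  obtains B :: "real^'n^'n" where "bij (\<lambda>x. C *v x)" "inv (\<lambda>x. C *v x) = (\<lambda>x. B *v x)"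
proof -
  obtain B where B: "C ** B = mat 1" "B ** C = mat 1"
    using assms unfolding invertible_def by blast
  have left: "(\<lambda>x. B *v x) \<circ> (\<lambda>x. C *v x) = id"
    using B by (auto simp: fun_eq_iff matrix_vector_mul_assoc)
  have right: "(\<lambda>x. C *v x) \<circ> (\<lambda>x. B *v x) = id"
    using B by (auto simp: fun_eq_iff matrix_vector_mul_assoc)
  show ?thesis using that o_bij[OF left right] inv_unique_comp[OF right left] by blast
qed

section \<open>Linearisation of an equivariant diffeomorphism\<close>

lemma invertible_derivative_of_bij:
  fixes f :: "real^'n \<Rightarrow> real^'n"
  assumes "bij f" and dL: "(f has_derivative L) (at x)"
    and dM: "(inv f has_derivative M) (at (f x))"
  shows "invertible (matrix L)"
proof -
  have "((inv f \<circ> f) has_derivative (M \<circ> L)) (at x)"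
    using diff_chain_at[OF dL dM] .
  moreover have "inv f \<circ> f = id"
    using \<open>bij f\<close> by (simp add: bij_is_inj)
  ultimately have "(id has_derivative (M \<circ> L)) (at x)" by simp
  then have "M \<circ> L = id"
    using has_derivative_unique has_derivative_id unfolding id_def by metis
  then have "matrix M ** matrix L = mat 1"
    by (metis has_derivative_linear[OF dL] has_derivative_linear[OF dM]
        matrix_compose matrix_id_mat_1)
  then show ?thesis
    using invertible_left_inverse by blast
qed

text \<open>Differentiating f (P x) = Q (f x) at the fixed point 0 of P shows that the
  derivative of f at 0 intertwines P and Q.\<close>
lemma derivative_intertwines:
  fixes f :: "real^'n \<Rightarrow> real^'m"
  assumes dL: "(f has_derivative L) (at 0)"
    and eq: "\<And>x. f (P *v x) = Q *v f x"
  shows "matrix L ** P = Q ** matrix L"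
proof -
  have dLP: "((f \<circ> (\<lambda>x. P *v x)) has_derivative (L \<circ> (\<lambda>x. P *v x))) (at 0)"
    by (rule diff_chain_at) (auto intro!: linear_imp_has_derivative simp: dL)
  have dQL: "(((\<lambda>x. Q *v x) \<circ> f) has_derivative ((\<lambda>x. Q *v x) \<circ> L)) (at 0)"
    by (rule diff_chain_at) (auto intro!: linear_imp_has_derivative simp: dL)
  have "f \<circ> (\<lambda>x. P *v x) = (\<lambda>x. Q *v x) \<circ> f"
    using eq by auto
  with dLP dQL have "L \<circ> (\<lambda>x. P *v x) = (\<lambda>x. Q *v x) \<circ> L"
    using has_derivative_unique by metis
  then have "matrix (L \<circ> (\<lambda>x. P *v x)) = matrix ((\<lambda>x. Q *v x) \<circ> L)"
    by simp
  then show ?thesis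
    by (simp add: matrix_compose has_derivative_linear[OF dL])
qed

lemma linear_conjugacy_from_equivariant_bij:
  fixes f :: "real^'n \<Rightarrow> real^'n" and P Q :: "'i \<Rightarrow> real^'n^'n"
  assumes "bij f" and dL: "(f has_derivative L) (at 0)"
    and "(inv f has_derivative M) (at (f 0))"
    and eq: "\<forall>x. \<forall>r\<in>I. f (P r *v x) = Q r *v f x"
  shows "\<exists>C :: real^'n^'n. invertible C \<and> (\<forall>r\<in>I. C ** P r = Q r ** C)"
  using invertible_derivative_of_bij[OF assms(1-3)] derivative_intertwines[OF dL] eq
  by blast

definition unit_index :: "'n \<Rightarrow> 'n \<Rightarrow> nat" where
  "unit_index i = (\<lambda>j. if j = i then 1 else 0)"

definition index_degree :: "('n::finite \<Rightarrow> nat) \<Rightarrow> nat" where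
  "index_degree al = sum al UNIV"

definition low_order_indices :: "('n::finite \<Rightarrow> nat) set" where
  "low_order_indices = insert (\<lambda>_. 0) (range unit_index)"

lemma inj_unit_index: "inj unit_index"
  unfolding inj_def unit_index_def by (metis one_neq_zero)

lemma unit_index_nonzero: "unit_index i \<noteq> (\<lambda>_. 0)"
proof
  assume "unit_index i = (\<lambda>_. 0)"
  then have "unit_index i i = 0" by simp
  then show False by (simp add: unit_index_def)
qed

lemma zero_index_not_unit: "(\<lambda>_. 0) \<notin> range unit_index"
  using unit_index_nonzero by (metis rangeE)

lemma finite_low_order_indices: "finite low_order_indices"
  unfolding low_order_indices_def by simp

lemma low_order_indices_iff: "al \<in> low_order_indices \<longleftrightarrow> index_degree al < 2"
proof
  assume "al \<in> low_order_indices"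
  then show "index_degree al < 2"
    unfolding low_order_indices_def index_degree_def unit_index_def by auto
next
  assume "index_degree al < 2"
  then consider "index_degree al = 0" | "index_degree al = Suc 0" by linarith
  then show "al \<in> low_order_indices"
  proof cases
    case 1
    then show ?thesis
      unfolding index_degree_def low_order_indices_def by (auto simp: fun_eq_iff)
  next
    case 2
    then obtain i where "al i = Suc 0" "\<forall>j. i \<noteq> j \<longrightarrow> al j = 0"
      unfolding index_degree_def by (auto simp: sum_eq_Suc0_iff)
    then have "al = unit_index i"
      unfolding unit_index_def by (auto simp: fun_eq_iff)
    then show ?thesis
      unfolding low_order_indices_def by auto
  qed
qed

lemma monomial_at_zero_index: "monomial_at x0 (\<lambda>_. 0) y = 1"
  unfolding monomial_at_def by simp

lemma monomial_at_unit_index: "monomial_at x0 (unit_index i) y = y$i - x0$i"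
proof -
  have "monomial_at x0 (unit_index i) y = (\<Prod>j\<in>UNIV. if j = i then y$j - x0$j else 1)"
    unfolding monomial_at_def unit_index_def by (intro prod.cong) auto
  also have "\<dots> = y$i - x0$i"
    by (subst prod.delta) auto
  finally show ?thesis .
qed

lemma sum_low_order_terms:
  fixes a :: "('n::finite \<Rightarrow> nat) \<Rightarrow> 'a::real_vector"
  shows
  "(\<Sum>al\<in>low_order_indices. monomial_at x0 al y *\<^sub>R a al)
     = a (\<lambda>_. 0) + (\<Sum>i\<in>UNIV. (y$i - x0$i) *\<^sub>R a (unit_index i))"
proof -
  have "(\<Sum>al\<in>low_order_indices. monomial_at x0 al y *\<^sub>R a al)
      = monomial_at x0 (\<lambda>_. 0) y *\<^sub>R a (\<lambda>_. 0)
        + (\<Sum>al\<in>range unit_index. monomial_at x0 al y *\<^sub>R a al)"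
    unfolding low_order_indices_def using zero_index_not_unit by (subst sum.insert) simp_all
  then show ?thesis
    by (simp add: sum.reindex[OF inj_unit_index] monomial_at_zero_index monomial_at_unit_index)
qed

lemma monomial_at_diagonal: "monomial_at x0 al (x0 + (\<chi> i. s)) = s ^ index_degree al"
  unfolding monomial_at_def index_degree_def by (simp add: power_sum)

lemma abs_monomial_at_le:
  assumes "norm (y - x0) \<le> t"
  shows "\<bar>monomial_at x0 al y\<bar> \<le> t ^ index_degree al"
proof -
  have "\<bar>monomial_at x0 al y\<bar> = (\<Prod>i\<in>UNIV. \<bar>y$i - x0$i\<bar> ^ al i)"
    unfolding monomial_at_def by (simp add: abs_prod power_abs)
  also have "\<dots> \<le> (\<Prod>i\<in>UNIV. t ^ al i)"
  proof (intro prod_mono conjI)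
    fix i
    have "\<bar>y$i - x0$i\<bar> \<le> t"
      using component_le_norm_cart[of "y - x0" i] assms by simp
    then show "\<bar>y$i - x0$i\<bar> ^ al i \<le> t ^ al i"
      by (intro power_mono) auto
  qed auto
  also have "\<dots> = t ^ index_degree al"
    unfolding index_degree_def by (simp add: power_sum)
  finally show ?thesis .
qed

lemma real_analytic_matrix: "real_analytic (\<lambda>x::real^'n. (A::real^'n^'m) *v x)"
  unfolding real_analytic_def real_analytic_at_def
proof (intro allI exI[of _ 1] conjI)
  show "(0::real) < 1" by simp
  fix x0 :: "real^'n"
  text \<open>The Taylor series at x0: A x0 in degree 0, the columns of A in degree 1.\<close>
  define a where "a al = (if al = (\<lambda>_. 0) then A *v x0
      else if al \<in> range unit_index then A *v (\<chi> j. real (al j)) else 0)" for al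
  have a_unit: "a (unit_index i) = A *v axis i 1" for i
  proof -
    have "(\<chi> j. real (unit_index i j)) = axis i 1"
      by (simp add: vec_eq_iff axis_def unit_index_def)
    then show ?thesis
      by (simp add: a_def unit_index_nonzero)
  qed
  have a_zero: "a (\<lambda>_. 0) = A *v x0"
    by (simp add: a_def)
  have a_high: "a al = 0" if "al \<notin> low_order_indices" for al
    using that unfolding a_def low_order_indices_def by auto
  show "\<exists>a. \<forall>y\<in>ball x0 1. (\<lambda>al. norm (monomial_at x0 al y *\<^sub>R a al)) summable_on UNIV \<and>
     ((\<lambda>al. monomial_at x0 al y *\<^sub>R a al) has_sum A *v y) UNIV"
  proof (rule exI[of _ a], intro ballI conjI)
    fix y :: "real^'n"
    have "((\<lambda>al. norm (monomial_at x0 al y *\<^sub>R a al)) has_sum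
        (\<Sum>al\<in>low_order_indices. norm (monomial_at x0 al y *\<^sub>R a al))) UNIV"
      by (rule has_sum_finite_neutralI[OF finite_low_order_indices]) (auto simp: a_high)
    then show "(\<lambda>al. norm (monomial_at x0 al y *\<^sub>R a al)) summable_on UNIV"
      using summable_on_def by blast
    have "(\<Sum>i\<in>UNIV. (y$i - x0$i) *\<^sub>R (A *v axis i 1))
        = A *v (\<Sum>i\<in>UNIV. (y - x0)$i *s axis i 1)"
      by (simp add: vec.sum vec.scale scalar_mult_eq_scaleR
          linear.scaleR[OF matrix_vector_mul_linear])
    also have "\<dots> = A *v (y - x0)"
      using basis_expansion[of "y - x0"] by simp
    finally have "(\<Sum>al\<in>low_order_indices. monomial_at x0 al y *\<^sub>R a al) = A *v y"
      by (simp add: sum_low_order_terms a_unit a_zero vec.diff)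
    then show "((\<lambda>al. monomial_at x0 al y *\<^sub>R a al) has_sum A *v y) UNIV"
      by (intro has_sum_finite_neutralI[OF finite_low_order_indices]) (auto simp: a_high)
  qed
qed

section \<open>Real-analytic maps are differentiable\<close>

lemma has_derivative_quadratic_remainder:
  fixes f :: "'a::real_normed_vector \<Rightarrow> 'b::real_normed_vector"
  assumes "bounded_linear L" and "s > 0"
    and bound: "\<And>y. norm (y - x0) \<le> s \<Longrightarrow> norm (f y - f x0 - L (y - x0)) \<le> K * norm (y - x0)^2"
  shows "(f has_derivative L) (at x0)"
proof -
  have small: "\<forall>\<^sub>F y in at x0.
      norm (norm (f y - f x0 - L (y - x0)) / norm (y - x0)) \<le> K * norm (y - x0)"
    unfolding eventually_at
  proof (rule exI[of _ s], intro conjI \<open>s > 0\<close> ballI impI)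
    fix y assume y: "y \<noteq> x0 \<and> dist y x0 < s"
    then have pos: "norm (y - x0) > 0" by simp
    have "norm (f y - f x0 - L (y - x0)) \<le> K * norm (y - x0) * norm (y - x0)"
      using bound[of y] y by (simp add: dist_norm power2_eq_square mult.assoc)
    then show "norm (norm (f y - f x0 - L (y - x0)) / norm (y - x0)) \<le> K * norm (y - x0)"
      by (simp add: pos_divide_le_eq[OF pos])
  qed
  have "((\<lambda>y. K * norm (y - x0)) \<longlongrightarrow> 0) (at x0)"
    using tendsto_norm_zero[OF LIM_zero[OF tendsto_ident_at]] by (rule tendsto_mult_right_zero)
  then show ?thesis
    unfolding has_derivative_iff_norm using \<open>bounded_linear L\<close> Lim_null_comparison[OF small]
    by blast
qed

lemma power_series_tail_bound:
  fixes a :: "('n::finite \<Rightarrow> nat) \<Rightarrow> real^'m"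
  assumes sum_y: "((\<lambda>al. monomial_at x0 al y *\<^sub>R a al) has_sum F) UNIV"
    and sum_diag: "((\<lambda>al. norm (monomial_at x0 al (x0 + (\<chi> i. s)) *\<^sub>R a al)) has_sum M) UNIV"
    and "s > 0" and ys: "norm (y - x0) \<le> s"
  shows "norm (F - (\<Sum>al\<in>low_order_indices. monomial_at x0 al y *\<^sub>R a al))
           \<le> (norm (y - x0) / s)^2 * M"
proof -
  define t where "t = norm (y - x0)"
  define low where "low al = (if al \<in> low_order_indices then monomial_at x0 al y *\<^sub>R a al else 0)"
    for al
  define tail where "tail al = (if al \<in> low_order_indices then 0 else monomial_at x0 al y *\<^sub>R a al)"
    for al
  have "(low has_sum (\<Sum>al\<in>low_order_indices. monomial_at x0 al y *\<^sub>R a al)) UNIV"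
    by (rule has_sum_finite_neutralI[OF finite_low_order_indices]) (auto simp: low_def)
  then have "((\<lambda>al. monomial_at x0 al y *\<^sub>R a al + - low al) has_sum
      (F + - (\<Sum>al\<in>low_order_indices. monomial_at x0 al y *\<^sub>R a al))) UNIV"
    by (intro has_sum_add[OF sum_y]) (simp add: has_sum_uminus)
  moreover have "(\<lambda>al. monomial_at x0 al y *\<^sub>R a al + - low al) = tail"
    unfolding low_def tail_def by auto
  ultimately have sum_tail:
    "(tail has_sum (F - (\<Sum>al\<in>low_order_indices. monomial_at x0 al y *\<^sub>R a al))) UNIV"
    by simp
  have ts: "0 \<le> t/s" "t/s \<le> 1"
    using ys \<open>s > 0\<close> unfolding t_def by auto
  show ?thesis
    unfolding t_def[symmetric]
  proof (rule norm_infsum_le[OF sum_tail has_sum_cmult_right[OF sum_diag]])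
    fix al :: "'n \<Rightarrow> nat"
    show "norm (tail al) \<le> (t/s)^2 * norm (monomial_at x0 al (x0 + (\<chi> i. s)) *\<^sub>R a al)"
    proof (cases "al \<in> low_order_indices")
      case False
      then have deg: "2 \<le> index_degree al"
        using low_order_indices_iff[of al] by linarith
      have "norm (tail al) = \<bar>monomial_at x0 al y\<bar> * norm (a al)"
        unfolding tail_def using False by simp
      also have "\<dots> \<le> t ^ index_degree al * norm (a al)"
        by (intro mult_right_mono abs_monomial_at_le) (auto simp: t_def)
      also have "t ^ index_degree al = (t/s) ^ index_degree al * s ^ index_degree al"
        using \<open>s > 0\<close> by (simp add: power_divide)
      also have "(t/s) ^ index_degree al \<le> (t/s)^2"
        by (rule power_decreasing[OF deg ts])
      finally have "norm (tail al) \<le> (t/s)^2 * (s ^ index_degree al * norm (a al))"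
        using \<open>s > 0\<close> by (simp add: mult_right_mono order_trans mult.assoc)
      then show ?thesis
        using \<open>s > 0\<close> by (simp add: monomial_at_diagonal)
    qed (simp add: tail_def)
  qed
qed

lemma real_analytic_at_has_derivative:
  fixes f :: "real^'n \<Rightarrow> real^'m"
  assumes "real_analytic_at f x0"
  shows "\<exists>L. (f has_derivative L) (at x0)"
proof -
  obtain r a where "r > 0" and series: "\<And>y. y \<in> ball x0 r \<Longrightarrow>
        ((\<lambda>al. norm (monomial_at x0 al y *\<^sub>R a al)) summable_on UNIV) \<and>
        ((\<lambda>al. monomial_at x0 al y *\<^sub>R a al) has_sum f y) UNIV"
    using assms unfolding real_analytic_at_def by blast
  define n where "n = real CARD('n)"
  have "n \<ge> 1" unfolding n_def by simp
  define s where "s = r / (2 * n)"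
  have "s > 0" and "s < r"
    unfolding s_def using \<open>r > 0\<close> \<open>n \<ge> 1\<close> by (auto simp: field_simps)
  have "norm ((\<chi> i. s) :: real^'n) \<le> (\<Sum>i\<in>UNIV. \<bar>(\<chi> i. s :: real^'n)$i\<bar>)"
    by (rule norm_le_l1_cart)
  also have "\<dots> = n * s"
    unfolding n_def using \<open>s > 0\<close> by simp
  also have "\<dots> < r"
    unfolding s_def using \<open>r > 0\<close> \<open>n \<ge> 1\<close> by (simp add: field_simps)
  finally have "x0 + (\<chi> i. s) \<in> ball x0 r"
    by (simp add: dist_norm)
  then obtain M where sum_diag:
    "((\<lambda>al. norm (monomial_at x0 al (x0 + (\<chi> i. s)) *\<^sub>R a al)) has_sum M) UNIV"
    using series by (auto simp: summable_on_def)
  define L where "L h = (\<Sum>i\<in>UNIV. h$i *\<^sub>R a (unit_index i))" for h :: "real^'n"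
  have "bounded_linear L"
    unfolding L_def
    by (intro bounded_linear_sum bounded_linear_compose[OF bounded_linear_scaleR_left]
        bounded_linear_vec_nth)
  have remainder: "norm (f y - a (\<lambda>_. 0) - L (y - x0)) \<le> M / s^2 * norm (y - x0)^2"
    if "norm (y - x0) \<le> s" for y
  proof -
    have "y \<in> ball x0 r"
      using that \<open>s < r\<close> by (simp add: dist_norm norm_minus_commute)
    then have "norm (f y - (a (\<lambda>_. 0) + L (y - x0))) \<le> (norm (y - x0) / s)^2 * M"
      using power_series_tail_bound[OF _ sum_diag \<open>s > 0\<close> that] series
      by (simp add: sum_low_order_terms L_def)
    then show ?thesis
      by (simp add: power_divide field_simps diff_diff_eq)
  qed
  have "f x0 = a (\<lambda>_. 0)"
    using remainder[of x0] \<open>s > 0\<close> linear_0[OF bounded_linear.linear[OF \<open>bounded_linear L\<close>]]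
    by simp
  then have "(f has_derivative L) (at x0)"
    using remainder
    by (intro has_derivative_quadratic_remainder[OF \<open>bounded_linear L\<close> \<open>s > 0\<close>, of _ _ "M / s^2"])
      simp
  then show ?thesis by blast
qed

lemma equivariant_diffeo_iff_linear_conjugacy:
  fixes Reg :: "(real^'n \<Rightarrow> real^'n) \<Rightarrow> bool" and P Q :: "'i \<Rightarrow> real^'n^'n"
  assumes Reg_differentiable: "\<And>g x. Reg g \<Longrightarrow> g differentiable (at x)"
    and Reg_matrix: "\<And>A. Reg (\<lambda>x. A *v x)"
  shows "(\<exists>f. (bij f \<and> Reg f \<and> Reg (inv f)) \<and> (\<forall>x. \<forall>r\<in>I. f (P r *v x) = Q r *v f x))
     \<longleftrightarrow> (\<exists>C :: real^'n^'n. invertible C \<and> (\<forall>r\<in>I. C ** P r = Q r ** C))"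
proof
  assume "\<exists>f. (bij f \<and> Reg f \<and> Reg (inv f)) \<and> (\<forall>x. \<forall>r\<in>I. f (P r *v x) = Q r *v f x)"
  then obtain f where f: "bij f" "Reg f" "Reg (inv f)"
    and equivariant: "\<forall>x. \<forall>r\<in>I. f (P r *v x) = Q r *v f x"
    by blast
  obtain L where "(f has_derivative L) (at 0)"
    using Reg_differentiable[OF f(2)] unfolding differentiable_def by blast
  moreover obtain M where "(inv f has_derivative M) (at (f 0))"
    using Reg_differentiable[OF f(3)] unfolding differentiable_def by blast
  ultimately show "\<exists>C. invertible C \<and> (\<forall>r\<in>I. C ** P r = Q r ** C)"
    using linear_conjugacy_from_equivariant_bij[OF f(1) _ _ equivariant] by blast
next
  assume "\<exists>C :: real^'n^'n. invertible C \<and> (\<forall>r\<in>I. C ** P r = Q r ** C)"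
  then obtain C :: "real^'n^'n" where C: "invertible C"
    and intertwines: "\<forall>r\<in>I. C ** P r = Q r ** C"
    by blast
  obtain B :: "real^'n^'n" where "bij (\<lambda>x. C *v x)" "inv (\<lambda>x. C *v x) = (\<lambda>x. B *v x)"
    using invertible_matrix_map_inverse[OF C] by blast
  moreover have "\<forall>x. \<forall>r\<in>I. C *v (P r *v x) = Q r *v (C *v x)"
    using intertwines by (simp add: matrix_vector_mul_assoc)
  ultimately show "\<exists>f. (bij f \<and> Reg f \<and> Reg (inv f)) \<and> (\<forall>x. \<forall>r\<in>I. f (P r *v x) = Q r *v f x)"
    using Reg_matrix[of C] Reg_matrix[of B] by (intro exI[of _ "\<lambda>x. C *v x"]) simp
qed

theorem theorem9p3:
  fixes I :: "'i set" and P Q :: "'i \<Rightarrow> real^'n^'n"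
  assumes "\<forall>r\<in>I. invertible (P r) \<and> invertible (Q r)"
  shows "((\<exists>f :: real^'n \<Rightarrow> real^'n. C1_diffeo f \<and> (\<forall>x. \<forall>r\<in>I. f (P r *v x) = Q r *v f x))
            \<longleftrightarrow> (\<exists>C :: real^'n^'n. invertible C \<and> (\<forall>r\<in>I. C ** P r = Q r ** C)))
       \<and> ((\<exists>f :: real^'n \<Rightarrow> real^'n. analytic_diffeo f \<and> (\<forall>x. \<forall>r\<in>I. f (P r *v x) = Q r *v f x))
            \<longleftrightarrow> (\<exists>C :: real^'n^'n. invertible C \<and> (\<forall>r\<in>I. C ** P r = Q r ** C)))"
proof
  have C1_differentiable: "g differentiable (at x)" if "C1_map g" for g :: "real^'n \<Rightarrow> real^'n" and x
    using that unfolding C1_map_def differentiable_def by blast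
  show "(\<exists>f. C1_diffeo f \<and> (\<forall>x. \<forall>r\<in>I. f (P r *v x) = Q r *v f x))
      \<longleftrightarrow> (\<exists>C. invertible C \<and> (\<forall>r\<in>I. C ** P r = Q r ** C))"
    unfolding C1_diffeo_def
    by (rule equivariant_diffeo_iff_linear_conjugacy[where Reg = C1_map, OF C1_differentiable C1_map_matrix])
next
  have analytic_differentiable: "g differentiable (at x)"
    if "real_analytic g" for g :: "real^'n \<Rightarrow> real^'n" and x
    using that real_analytic_at_has_derivative unfolding real_analytic_def differentiable_def
    by blast
  show "(\<exists>f. analytic_diffeo f \<and> (\<forall>x. \<forall>r\<in>I. f (P r *v x) = Q r *v f x))
      \<longleftrightarrow> (\<exists>C. invertible C \<and> (\<forall>r\<in>I. C ** P r = Q r ** C))"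
    unfolding analytic_diffeo_def
    by (rule equivariant_diffeo_iff_linear_conjugacy[where Reg = real_analytic, OF analytic_differentiable real_analytic_matrix])
qed

end
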